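(* Let $F$ be a perfect field of characteristic $p>0$, let $l,m$ be positive integers with $\gcd(l,m)=1$, let $m=ls+k$ and $s=tp+r$ be divisions with remainder with $1\le k<l$ and $0\le r<p$, and let $w\in F[x]$ be monic of degree $s$. Then $$\bigl(p\nmid l \text{ and } kw+lxw'=0\bigr)\iff \bigl(p\mid m \text{ and there exists a monic } u\in F[x] \text{ with } w=x^ru^p\bigr).$$
   Context: $w'$ denotes the formal derivative of $w$. *)

theory Defs
  imports "HOL-Computational_Algebra.Computational_Algebra"
begin

definition perfect_field :: "'a::field itself \<Rightarrow> bool" where
  "perfect_field _ \<longleftrightarrow> CHAR('a) = 0 \<or> surj (\<lambda>x::'a. x ^ CHAR('a))"

end

theory Submission
  imports Defs "HOL-Number_Theory.Cong"
begin

text \<open>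
  The coefficient of \<open>x\<^sup>i\<close> in \<open>k w + l x w'\<close> is \<open>(k + l i) w\<^sub>i\<close>. If this vanishes and
  \<open>p \<nmid> l\<close>, then the leading coefficient forces \<open>p \<mid> k + l s = m\<close>, and every
  nonzero coefficient sits at an index \<open>i \<equiv> s \<equiv> r (mod p)\<close>; so \<open>w = x\<^sup>r v(x\<^sup>p)\<close>, and
  since the Frobenius map is surjective, \<open>v(x\<^sup>p)\<close> is a \<open>p\<close>-th power \<open>u\<^sup>p\<close>.
  Conversely \<open>u\<^sup>p\<close> has derivative zero, so \<open>x w' = r w\<close> for \<open>w = x\<^sup>r u\<^sup>p\<close>, whence
  \<open>k w + l x w' = (k + l r) w\<close>, and \<open>k + l r \<equiv> m \<equiv> 0 (mod p)\<close>.
\<close>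

lemma coeff_euler_operator:
  fixes w :: "'a::{comm_semiring_1,semiring_no_zero_divisors} poly"
  shows "coeff (smult (of_nat k) w + smult (of_nat l) ([:0, 1:] * pderiv w)) i
     = of_nat (k + l * i) * coeff w i"
  by (cases i) (simp_all add: coeff_pCons coeff_pderiv algebra_simps)

lemma pderiv_power_CHAR:
  fixes u :: "'a::{comm_semiring_1,semiring_no_zero_divisors} poly"
  shows "pderiv (u ^ CHAR('a)) = 0"
  by (simp only: pderiv_power of_nat_CHAR smult_0_left)

lemma x_mult_pderiv_x_power_mult:
  fixes v :: "'a::{comm_semiring_1,semiring_no_zero_divisors} poly"
  assumes "pderiv v = 0"
  shows "[:0, 1:] * pderiv ([:0, 1:] ^ r * v) = smult (of_nat r) ([:0, 1:] ^ r * v)"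
proof -
  have "[:0, 1:] * pderiv ([:0, 1:] ^ r :: 'a poly) = smult (of_nat r) ([:0, 1:] ^ r)"
  proof (cases r)
    case (Suc n)
    have "monom 1 1 * pderiv (monom (1::'a) r) = smult (of_nat r) (monom 1 r)"
      by (simp add: Suc pderiv_monom mult_monom smult_monom)
    then show ?thesis
      by (simp add: monom_altdef)
  qed simp
  then show ?thesis
    using assms by (simp add: pderiv_mult ac_simps)
qed

lemma euler_operator_x_power_mult_power_CHAR:
  fixes u :: "'a::{comm_semiring_1,semiring_no_zero_divisors} poly"
  assumes "w = [:0, 1:] ^ r * u ^ CHAR('a)"
  shows "smult (of_nat k) w + smult (of_nat l) ([:0, 1:] * pderiv w) = smult (of_nat (k + l * r)) w"
proof -
  have "[:0, 1:] * pderiv w = smult (of_nat r) w"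
    unfolding assms by (simp only: x_mult_pderiv_x_power_mult pderiv_power_CHAR)
  then show ?thesis
    by (simp add: smult_add_left)
qed

lemma euler_operator_x_power_mult_power_CHAR_eq_0:
  fixes u :: "'a::{comm_semiring_1,semiring_no_zero_divisors} poly"
  assumes "w = [:0, 1:] ^ r * u ^ CHAR('a)" and "CHAR('a) dvd k + l * r"
  shows "smult (of_nat k) w + smult (of_nat l) ([:0, 1:] * pderiv w) = 0"
proof -
  have "of_nat (k + l * r) = (0::'a)"
    using assms(2) of_nat_eq_0_iff_char_dvd by blast
  then show ?thesis
    unfolding euler_operator_x_power_mult_power_CHAR[OF assms(1)] by simp
qed

lemma power_CHAR_eq_imp_eq:
  fixes x y :: "'a::idom"
  assumes "CHAR('a) > 0" and "x ^ CHAR('a) = y ^ CHAR('a)"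
  shows "x = y"
proof -
  have "((x - y) + y) ^ CHAR('a) = (x - y) ^ CHAR('a) + y ^ CHAR('a)"
    using assms(1) by (intro freshmans_dream) (auto intro: prime_CHAR_semidom)
  then have "(x - y) ^ CHAR('a) = 0"
    using assms(2) by simp
  then show ?thesis
    by simp
qed

lemma sum_monom_mult_CHAR_is_power:
  fixes a :: "nat \<Rightarrow> 'a::field"
  assumes "CHAR('a) > 0" and "surj (\<lambda>x::'a. x ^ CHAR('a))"
  shows "\<exists>u. (\<Sum>j\<in>A. monom (a j) (j * CHAR('a))) = u ^ CHAR('a)"
proof -
  have "\<forall>j. \<exists>c. a j = c ^ CHAR('a)"
    using surjD[OF assms(2)] by blast
  then obtain c where c: "\<And>j. a j = c j ^ CHAR('a)"
    by metis
  have "(\<Sum>j\<in>A. monom (c j) j) ^ CHAR('a) = (\<Sum>j\<in>A. monom (c j) j ^ CHAR('a))"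
    using assms(1) by (intro freshmans_dream_sum) (auto intro: prime_CHAR_semidom)
  also have "\<dots> = (\<Sum>j\<in>A. monom (a j) (j * CHAR('a)))"
    by (simp add: monom_power c)
  finally show ?thesis
    by (intro exI) (rule sym)
qed

lemma poly_eq_x_power_mult_sum_monom:
  fixes w :: "'a::comm_semiring_1 poly"
  assumes "p > 0" and "\<And>i. coeff w i \<noteq> 0 \<Longrightarrow> i mod p = r"
  shows "w = [:0, 1:] ^ r * (\<Sum>j\<le>degree w. monom (coeff w (r + j * p)) (j * p))"
proof (rule poly_eqI)
  fix i
  have "coeff ([:0, 1:] ^ r * (\<Sum>j\<le>degree w. monom (coeff w (r + j * p)) (j * p))) i
      = (\<Sum>j\<le>degree w. if r + j * p = i then coeff w i else 0)"
    unfolding monom_altdef[of 1 r, simplified, symmetric] sum_distrib_left mult_monom coeff_sum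
    by (simp cong: if_cong)
  also have "\<dots> = coeff w i"
  proof (cases "coeff w i = 0")
    case False
    then have "i mod p = r" and "i \<le> degree w"
      using assms(2) le_degree by auto
    then have i: "i = r + i div p * p" and "i div p \<le> degree w"
      using mod_div_mult_eq[of i p] div_le_dividend[of i p] by linarith+
    have "r + j * p = r + i div p * p \<longleftrightarrow> j = i div p" for j
      using assms(1) by simp
    with \<open>i div p \<le> degree w\<close> show ?thesis
      by (simp flip: i)
  qed (simp add: sum.neutral)
  finally show "coeff w i = coeff ([:0, 1:] ^ r * (\<Sum>j\<le>degree w. monom (coeff w (r + j * p)) (j * p))) i"
    by simp
qed

lemma ex_x_power_mult_power_CHAR:
  fixes w :: "'a::field poly"
  assumes "CHAR('a) > 0" and "surj (\<lambda>x::'a. x ^ CHAR('a))"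
    and "\<And>i. coeff w i \<noteq> 0 \<Longrightarrow> i mod CHAR('a) = r"
  shows "\<exists>u. w = [:0, 1:] ^ r * u ^ CHAR('a)"
proof -
  obtain u where u: "(\<Sum>j\<le>degree w. monom (coeff w (r + j * CHAR('a))) (j * CHAR('a))) = u ^ CHAR('a)"
    using sum_monom_mult_CHAR_is_power[OF assms(1,2), of "\<lambda>j. coeff w (r + j * CHAR('a))"] by blast
  have "w = [:0, 1:] ^ r * (\<Sum>j\<le>degree w. monom (coeff w (r + j * CHAR('a))) (j * CHAR('a)))"
    using assms(1,3) by (rule poly_eq_x_power_mult_sum_monom)
  then have "w = [:0, 1:] ^ r * u ^ CHAR('a)"
    unfolding u .
  then show ?thesis ..
qed

lemma mod_eq_if_dvd_add_mult:
  fixes p k l i j :: nat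
  assumes "coprime l p" and "p dvd k + l * i" and "p dvd k + l * j"
  shows "i mod p = j mod p"
proof -
  have "[k + l * i = k + l * j] (mod p)"
    using assms(2,3) by (metis cong_0_iff cong_sym cong_trans)
  then have "[l * i = l * j] (mod p)"
    by (rule cong_add_lcancel_nat[THEN iffD1])
  then have "[i = j] (mod p)"
    using cong_mult_lcancel_nat[OF assms(1)] by blast
  then show ?thesis
    unfolding cong_def .
qed

lemma euler_operator_eq_0_imp_power_CHAR:
  fixes w :: "'a::field poly"
  assumes "CHAR('a) > 0" and "surj (\<lambda>x::'a. x ^ CHAR('a))" and "\<not> CHAR('a) dvd l" and "w \<noteq> 0"
    and "smult (of_nat k) w + smult (of_nat l) ([:0, 1:] * pderiv w) = 0"
  shows "CHAR('a) dvd k + l * degree w"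
    and "\<exists>u. w = [:0, 1:] ^ (degree w mod CHAR('a)) * u ^ CHAR('a)"
proof -
  have "coprime l CHAR('a)"
    using assms(1,3) prime_CHAR_semidom prime_imp_coprime coprime_commute by blast
  have dvd_coeff: "CHAR('a) dvd k + l * i" if "coeff w i \<noteq> 0" for i
  proof -
    have "of_nat (k + l * i) * coeff w i = 0"
      using assms(5) coeff_euler_operator[of k w l i] by simp
    then show ?thesis
      using that of_nat_eq_0_iff_char_dvd[where ?'a = 'a] by (simp del: of_nat_add of_nat_mult)
  qed
  then show "CHAR('a) dvd k + l * degree w"
    using assms(4) by simp
  then have "i mod CHAR('a) = degree w mod CHAR('a)" if "coeff w i \<noteq> 0" for i
    using mod_eq_if_dvd_add_mult[OF \<open>coprime l CHAR('a)\<close> dvd_coeff[OF that]] by blast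
  then show "\<exists>u. w = [:0, 1:] ^ (degree w mod CHAR('a)) * u ^ CHAR('a)"
    by (rule ex_x_power_mult_power_CHAR[OF assms(1,2)])
qed

theorem lemma4p9:
  fixes w :: "'a::field poly" and p l m s k t r :: nat
  assumes "CHAR('a) = p" and "p > 0" and "perfect_field TYPE('a)"
    and "l > 0" and "m > 0" and "coprime l m"
    and "m = l * s + k" and "1 \<le> k" and "k < l"
    and "s = t * p + r" and "r < p"
    and "lead_coeff w = 1" and "degree w = s"
  shows "(\<not> p dvd l \<and> smult (of_nat k) w + smult (of_nat l) ([:0, 1:] * pderiv w) = 0)
     \<longleftrightarrow> (p dvd m \<and> (\<exists>u :: 'a poly. lead_coeff u = 1 \<and> w = [:0, 1:] ^ r * u ^ p))"
proof
  assume euler: "\<not> p dvd l \<and> smult (of_nat k) w + smult (of_nat l) ([:0, 1:] * pderiv w) = 0"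
  have "surj (\<lambda>x::'a. x ^ CHAR('a))" and "w \<noteq> 0" and "s mod p = r"
    using assms(1-3,10-12) unfolding perfect_field_def by auto
  then have "p dvd m" and "\<exists>u. w = [:0, 1:] ^ r * u ^ p"
    using euler_operator_eq_0_imp_power_CHAR[of l w k] euler assms(1,2,7,13) by (auto simp: add.commute)
  then obtain u where w: "w = [:0, 1:] ^ r * u ^ p"
    by blast
  have "lead_coeff u ^ p = 1 ^ p"
    using assms(12) by (simp add: w lead_coeff_mult lead_coeff_power)
  then have "lead_coeff u = 1"
    using power_CHAR_eq_imp_eq assms(1,2) by metis
  with \<open>p dvd m\<close> w show "p dvd m \<and> (\<exists>u :: 'a poly. lead_coeff u = 1 \<and> w = [:0, 1:] ^ r * u ^ p)"
    by blast
next
  assume "p dvd m \<and> (\<exists>u :: 'a poly. lead_coeff u = 1 \<and> w = [:0, 1:] ^ r * u ^ p)"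
  then obtain u where "p dvd m" and w: "w = [:0, 1:] ^ r * u ^ CHAR('a)"
    using assms(1) by blast
  have "\<not> p dvd l"
    using coprime_common_divisor[OF assms(6) _ \<open>p dvd m\<close>] assms(1,2) prime_CHAR_semidom not_prime_unit
    by blast
  moreover have "m = (k + l * r) + p * (l * t)"
    using assms(7,10) by (simp add: algebra_simps)
  then have "CHAR('a) dvd k + l * r"
    using \<open>p dvd m\<close> assms(1) by (metis dvd_add_left_iff dvd_triv_left)
  ultimately show "\<not> p dvd l \<and> smult (of_nat k) w + smult (of_nat l) ([:0, 1:] * pderiv w) = 0"
    using euler_operator_x_power_mult_power_CHAR_eq_0[OF w] by blast
qed

end
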